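(* If $\mathcal{O}$ contains only upwards closed modalities, then $\mathcal{O}$ is decomposable if and only if for all sets $X,Y$, all relations $R\subseteq X\times Y$ and all $t\in TTX$, $r\in TTY$, $t\,\mathcal{O}(\mathcal{O}(R))\,r$ implies $\mu t\,\mathcal{O}(R)\,\mu r$.
   Context: $\Sigma$ is a signature of effect operations with arities $\alpha^n\to\alpha$, $\mathbf{N}\times\alpha^n\to\alpha$, $\alpha^{\mathbf{N}}\to\alpha$ or $\mathbf{N}\times\alpha^{\mathbf{N}}\to\alpha$. $TX$ is the set of possibly infinite labelled trees with leaves $\bot$ or elements of $X$ and internal nodes labelled by operations (or $\sigma_m$, $m\in\mathbb{N}$) with children according to arity; $t\le t'$ iff $t$ is obtained from $t'$ by replacing subtrees with $\bot$. $\mu:TTX\to TX$ replaces each leaf of a tree of trees by that tree. $\mathbf{1}=\{*\}$. A set $\mathcal{O}$ of modalities is given with $[\![o]\!]\subseteq T\mathbf{1}$; upwards closed means $[\![o]\!]$ upward closed under $\le$. $t[\in P]\in T\mathbf{1}$ replaces leaves in $P$ by $*$ and other $X$-leaves by $\bot$; $o(A)=\{t\in TX\mid t[\in A]\in[\![o]\!]\}$. $R[A]=\{y\mid\exists x\in A,\ xRy\}$; $\mathcal{O}$-relator: $t\,\mathcal{O}(R)\,t'$ iff $\forall A\subseteq X\ \forall o\in\mathcal{O}$, $t\in o(A)\Rightarrow t'\in o(R[A])$. $\mathcal{T}$ is the least class of formulas containing $o(\top),o(\bot)$ ($o\in\mathcal{O}$) closed under arbitrary $\bigvee,\bigwedge$,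 with $[\![o(\top)]\!]=o(\{*\})$, $[\![o(\bot)]\!]=o(\emptyset)$, unions/intersections; $t\trianglelefteq t'$ on $T\mathbf{1}$ iff $\forall\Phi\in\mathcal{T}$, $t\in[\![\Phi]\!]\Rightarrow t'\in[\![\Phi]\!]$; $r\preccurlyeq r'$ on $TT\mathbf{1}$ iff $\forall o\,\forall\Phi\in\mathcal{T}$, $r\in o([\![\Phi]\!])\Rightarrow r'\in o([\![\Phi]\!])$. $\mathcal{O}$ is decomposable if $r\preccurlyeq r'$ implies $\mu r\trianglelefteq\mu r'$. *)

theory Defs
  imports Main
begin

text \<open>Labels of type 'l are the operation
 symbols (including the parametrised symbols sigma_m); ar l = Some n means arity n,
 ar l = None means countably infinite arity (children indexed by nat).
 Children at positions outside the arity are required to be Bot (see wf_tree).\<close>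

codatatype ('l, 'x) etree = Bot | Leaf 'x | Node 'l "nat \<Rightarrow> ('l, 'x) etree"

definition in_ar :: "('l \<Rightarrow> nat option) \<Rightarrow> 'l \<Rightarrow> nat \<Rightarrow> bool" where
  "in_ar ar l i = (case ar l of None \<Rightarrow> True | Some n \<Rightarrow> i < n)"

coinductive wf_tree :: "('l \<Rightarrow> nat option) \<Rightarrow> 'x set \<Rightarrow> ('l, 'x) etree \<Rightarrow> bool"
  for ar X where
  wf_Bot: "wf_tree ar X Bot"
| wf_Leaf: "x \<in> X \<Longrightarrow> wf_tree ar X (Leaf x)"
| wf_Node: "(\<forall>i. in_ar ar l i \<longrightarrow> wf_tree ar X (ts i)) \<Longrightarrow>
            (\<forall>i. \<not> in_ar ar l i \<longrightarrow> ts i = Bot) \<Longrightarrow> wf_tree ar X (Node l ts)"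

definition Tr :: "('l \<Rightarrow> nat option) \<Rightarrow> 'x set \<Rightarrow> ('l, 'x) etree set" where
  "Tr ar X = {t. wf_tree ar X t}"

coinductive le_tree :: "('l, 'x) etree \<Rightarrow> ('l, 'x) etree \<Rightarrow> bool" where
  le_Bot: "le_tree Bot t"
| le_Leaf: "le_tree (Leaf x) (Leaf x)"
| le_Node: "(\<forall>i. le_tree (ts i) (ts' i)) \<Longrightarrow> le_tree (Node l ts) (Node l ts')"

definition upclosed :: "('l \<Rightarrow> nat option) \<Rightarrow> ('l, unit) etree set \<Rightarrow> bool" where
  "upclosed ar S = (\<forall>t\<in>S. \<forall>t'\<in>Tr ar UNIV. le_tree t t' \<longrightarrow> t' \<in> S)"

primcorec join_aux :: "('l, 'x) etree + ('l, ('l, 'x) etree) etree \<Rightarrow> ('l, 'x) etree" where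
  "join_aux s = (case s of
      Inl t \<Rightarrow> (case t of Bot \<Rightarrow> Bot | Leaf x \<Rightarrow> Leaf x
                 | Node l ts \<Rightarrow> Node l (\<lambda>i. join_aux (Inl (ts i))))
    | Inr r \<Rightarrow> (case r of Bot \<Rightarrow> Bot
                 | Leaf t \<Rightarrow> (case t of Bot \<Rightarrow> Bot | Leaf x \<Rightarrow> Leaf x
                      | Node l ts \<Rightarrow> Node l (\<lambda>i. join_aux (Inl (ts i))))
                 | Node l rs \<Rightarrow> Node l (\<lambda>i. join_aux (Inr (rs i)))))"

definition join :: "('l, ('l, 'x) etree) etree \<Rightarrow> ('l, 'x) etree" where
  "join r = join_aux (Inr r)"

primcorec restr :: "'x set \<Rightarrow> ('l, 'x) etree \<Rightarrow> ('l, unit) etree" where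
  "restr P t = (case t of Bot \<Rightarrow> Bot
      | Leaf x \<Rightarrow> (if x \<in> P then Leaf () else Bot)
      | Node l ts \<Rightarrow> Node l (\<lambda>i. restr P (ts i)))"

definition omod :: "('l \<Rightarrow> nat option) \<Rightarrow> ('m \<Rightarrow> ('l, unit) etree set) \<Rightarrow> 'm
    \<Rightarrow> 'x set \<Rightarrow> 'x set \<Rightarrow> ('l, 'x) etree set" where
  "omod ar sem m X A = {t \<in> Tr ar X. restr A t \<in> sem m}"

definition rel_O :: "('l \<Rightarrow> nat option) \<Rightarrow> 'm set \<Rightarrow> ('m \<Rightarrow> ('l, unit) etree set)
    \<Rightarrow> 'x set \<Rightarrow> 'y set \<Rightarrow> ('x \<times> 'y) set \<Rightarrow> (('l, 'x) etree \<times> ('l, 'y) etree) set" where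
  "rel_O ar Om sem X Y R = {(t, t'). t \<in> Tr ar X \<and> t' \<in> Tr ar Y \<and>
      (\<forall>A. A \<subseteq> X \<longrightarrow> (\<forall>m\<in>Om. t \<in> omod ar sem m X A \<longrightarrow> t' \<in> omod ar sem m Y (R `` A)))}"

text \<open>Denotations of the formulas in the class \<T>: generated from o(top), o(bot)
  by arbitrary unions and intersections (empty conjunction = T1).\<close>
inductive_set Tsem :: "('l \<Rightarrow> nat option) \<Rightarrow> 'm set \<Rightarrow> ('m \<Rightarrow> ('l, unit) etree set)
    \<Rightarrow> ('l, unit) etree set set" for ar Om sem where
  T_top: "m \<in> Om \<Longrightarrow> omod ar sem m UNIV {()} \<in> Tsem ar Om sem"
| T_bot: "m \<in> Om \<Longrightarrow> omod ar sem m UNIV {} \<in> Tsem ar Om sem"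
| T_Or: "(\<forall>\<Phi>\<in>S. \<Phi> \<in> Tsem ar Om sem) \<Longrightarrow> \<Union>S \<in> Tsem ar Om sem"
| T_And: "(\<forall>\<Phi>\<in>S. \<Phi> \<in> Tsem ar Om sem) \<Longrightarrow> Tr ar UNIV \<inter> \<Inter>S \<in> Tsem ar Om sem"

definition tle :: "('l \<Rightarrow> nat option) \<Rightarrow> 'm set \<Rightarrow> ('m \<Rightarrow> ('l, unit) etree set)
    \<Rightarrow> ('l, unit) etree \<Rightarrow> ('l, unit) etree \<Rightarrow> bool" where
  "tle ar Om sem t t' = (\<forall>\<Phi>\<in>Tsem ar Om sem. t \<in> \<Phi> \<longrightarrow> t' \<in> \<Phi>)"

definition rle :: "('l \<Rightarrow> nat option) \<Rightarrow> 'm set \<Rightarrow> ('m \<Rightarrow> ('l, unit) etree set)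
    \<Rightarrow> ('l, ('l, unit) etree) etree \<Rightarrow> ('l, ('l, unit) etree) etree \<Rightarrow> bool" where
  "rle ar Om sem r r' = (\<forall>m\<in>Om. \<forall>\<Phi>\<in>Tsem ar Om sem.
      r \<in> omod ar sem m (Tr ar UNIV) \<Phi> \<longrightarrow> r' \<in> omod ar sem m (Tr ar UNIV) \<Phi>)"

definition decomposable :: "('l \<Rightarrow> nat option) \<Rightarrow> 'm set \<Rightarrow> ('m \<Rightarrow> ('l, unit) etree set) \<Rightarrow> bool" where
  "decomposable ar Om sem = (\<forall>r\<in>Tr ar (Tr ar UNIV). \<forall>r'\<in>Tr ar (Tr ar UNIV).
      rle ar Om sem r r' \<longrightarrow> tle ar Om sem (join r) (join r'))"

definition lift_prop :: "('l \<Rightarrow> nat option) \<Rightarrow> 'm set \<Rightarrow> ('m \<Rightarrow> ('l, unit) etree set)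
    \<Rightarrow> 'x set \<Rightarrow> 'y set \<Rightarrow> bool" where
  "lift_prop ar Om sem X Y = (\<forall>R t r. R \<subseteq> X \<times> Y \<longrightarrow>
      (t, r) \<in> rel_O ar Om sem (Tr ar X) (Tr ar Y) (rel_O ar Om sem X Y R) \<longrightarrow>
      (join t, join r) \<in> rel_O ar Om sem X Y R)"

end

theory Submission
  imports Defs
begin

text \<open>A tree of trees is probed only through restrictions of its leaves, and restriction
  commutes with the multiplication \<open>\<mu>\<close>. If \<open>t \<O>(\<O>(R)) r\<close> and \<open>A \<subseteq> X\<close>, restricting the
  inner trees of \<open>t\<close> to \<open>A\<close> and those of \<open>r\<close> to \<open>R[A]\<close> gives trees of unit trees related
  by \<open>\<preccurlyeq>\<close>, because \<open>\<O>(R)\<close>-related trees restrict to \<open>\<trianglelefteq>\<close>-related ones; decomposability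
  then compares the multiplications. Conversely, embed unit trees as trees over a
  singleton \<open>{c}\<close> with the identity relation, on which \<open>\<O>(R)\<close> is just \<open>\<trianglelefteq>\<close>. By upward
  closure a predicate on inner trees may be enlarged to its \<open>\<trianglelefteq>\<close>-upset, which is a formula
  of \<open>\<T>\<close> since \<open>\<T>\<close> has arbitrary joins and meets; hence \<open>\<preccurlyeq>\<close> implies \<open>\<O>(\<O>(R))\<close> of the
  embeddings, and the lifting property yields \<open>\<mu> r \<trianglelefteq> \<mu> r'\<close>.\<close>

lemma join_aux_simps [simp]:
  "join_aux (Inl Bot) = Bot"
  "join_aux (Inl (Leaf x)) = Leaf x"
  "join_aux (Inl (Node l ts)) = Node l (\<lambda>i. join_aux (Inl (ts i)))"
  "join_aux (Inr Bot) = Bot"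
  "join_aux (Inr (Leaf s)) = join_aux (Inl s)"
  "join_aux (Inr (Node l rs)) = Node l (\<lambda>i. join_aux (Inr (rs i)))"
  by (subst join_aux.code; simp split: etree.splits)+

lemma join_aux_Inl [simp]: "join_aux (Inl s) = s"
  by (coinduction arbitrary: s rule: etree.coinduct_strong)
    (case_tac s; auto simp: rel_fun_def)

lemma join_simps [simp]:
  "join Bot = Bot"
  "join (Leaf s) = s"
  "join (Node l rs) = Node l (\<lambda>i. join (rs i))"
  by (simp_all add: join_def)

lemma restr_simps [simp]:
  "restr P Bot = Bot"
  "restr P (Leaf x) = (if x \<in> P then Leaf () else Bot)"
  "restr P (Node l ts) = Node l (\<lambda>i. restr P (ts i))"
  by (subst restr.code; simp)+

lemma restr_map_etree: "restr P (map_etree id f t) = restr (f -` P) t"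
  by (coinduction arbitrary: t rule: etree.coinduct)
    (case_tac t; auto simp: rel_fun_def)

lemma restr_restr: "restr B (restr A t) = restr (if () \<in> B then A else {}) t"
  by (coinduction arbitrary: t rule: etree.coinduct_strong)
    (case_tac t; auto simp: rel_fun_def)

lemma restr_join: "restr A (join r) = join (map_etree id (restr A) r)"
  by (coinduction arbitrary: r rule: etree.coinduct_strong)
    (case_tac r; auto simp: rel_fun_def)

lemma join_map_etree: "join (map_etree id (map_etree id f) r) = map_etree id f (join r)"
  by (coinduction arbitrary: r rule: etree.coinduct_strong)
    (case_tac r; auto simp: rel_fun_def)

lemma join_in_Tr: "t \<in> Tr ar (Tr ar X) \<Longrightarrow> join t \<in> Tr ar X"
proof -
  have "wf_tree ar X u" if "wf_tree ar X u \<or> (\<exists>t. u = join t \<and> wf_tree ar (Tr ar X) t)" for u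
    using that
  proof (coinduction arbitrary: u rule: wf_tree.coinduct)
    case (wf_tree u)
    then show ?case
    proof
      assume "wf_tree ar X u"
      then show ?thesis by (cases rule: wf_tree.cases) auto
    next
      assume "\<exists>t. u = join t \<and> wf_tree ar (Tr ar X) t"
      then obtain t where u: "u = join t" and t: "wf_tree ar (Tr ar X) t" by blast
      from t show ?thesis
      proof (cases rule: wf_tree.cases)
        case (wf_Leaf s)
        then have "wf_tree ar X s" by (simp add: Tr_def)
        then show ?thesis using u wf_Leaf by (cases rule: wf_tree.cases) auto
      qed (use u in auto)
    qed
  qed
  then show "t \<in> Tr ar (Tr ar X) \<Longrightarrow> join t \<in> Tr ar X" by (auto simp: Tr_def)
qed

lemma map_etree_in_Tr: "t \<in> Tr ar X \<Longrightarrow> f ` X \<subseteq> Y \<Longrightarrow> map_etree id f t \<in> Tr ar Y"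
proof -
  assume fXY: "f ` X \<subseteq> Y"
  have "wf_tree ar Y u" if "\<exists>t. u = map_etree id f t \<and> wf_tree ar X t" for u
    using that
  proof (coinduction arbitrary: u rule: wf_tree.coinduct)
    case (wf_tree u)
    then obtain t where u: "u = map_etree id f t" and t: "wf_tree ar X t" by blast
    from t show ?case by (cases rule: wf_tree.cases) (use u fXY in auto)
  qed
  then show "t \<in> Tr ar X \<Longrightarrow> map_etree id f t \<in> Tr ar Y" by (auto simp: Tr_def)
qed

lemma restr_in_Tr: "t \<in> Tr ar X \<Longrightarrow> restr P t \<in> Tr ar UNIV"
proof -
  have "wf_tree ar UNIV u" if "\<exists>t. u = restr P t \<and> wf_tree ar X t" for u
    using that
  proof (coinduction arbitrary: u rule: wf_tree.coinduct)
    case (wf_tree u)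
    then obtain t where u: "u = restr P t" and t: "wf_tree ar X t" by blast
    from t show ?case by (cases rule: wf_tree.cases) (use u in auto)
  qed
  then show "t \<in> Tr ar X \<Longrightarrow> restr P t \<in> Tr ar UNIV" by (auto simp: Tr_def)
qed

lemma restr_image_Tr: "restr P ` Tr ar X \<subseteq> Tr ar UNIV"
  using restr_in_Tr by blast

lemma le_tree_restr: "t \<in> Tr ar X \<Longrightarrow> P \<inter> X \<subseteq> Q \<Longrightarrow> le_tree (restr P t) (restr Q t)"
proof -
  assume PQ: "P \<inter> X \<subseteq> Q"
  have "le_tree u v" if "\<exists>t. u = restr P t \<and> v = restr Q t \<and> wf_tree ar X t" for u v
    using that
  proof (coinduction arbitrary: u v rule: le_tree.coinduct)
    case (le_tree u v)
    then obtain t where u: "u = restr P t" "v = restr Q t" and t: "wf_tree ar X t" by blast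
    from t show ?case
      by (cases rule: wf_tree.cases) (use u PQ in \<open>auto, metis wf_tree.wf_Bot\<close>)
  qed
  then show "t \<in> Tr ar X \<Longrightarrow> le_tree (restr P t) (restr Q t)" by (auto simp: Tr_def)
qed

lemma omod_mono:
  assumes "upclosed ar (sem m)" and "t \<in> omod ar sem m X A" and "A \<inter> X \<subseteq> B"
  shows "t \<in> omod ar sem m X B"
  using assms le_tree_restr[of t ar X A B] restr_in_Tr[of t ar X B]
  by (auto simp: omod_def upclosed_def)

lemma omod_map_etree:
  assumes "t \<in> Tr ar X" and "f ` X \<subseteq> Y"
  shows "map_etree id f t \<in> omod ar sem m Y A \<longleftrightarrow> t \<in> omod ar sem m X (f -` A)"
  using assms map_etree_in_Tr by (auto simp: omod_def restr_map_etree)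

lemma omod_restr:
  assumes "t \<in> Tr ar X"
  shows "restr A t \<in> omod ar sem m UNIV B \<longleftrightarrow> t \<in> omod ar sem m X (if () \<in> B then A else {})"
  using assms restr_in_Tr by (auto simp: omod_def restr_restr)

lemma tle_iff_omod:
  assumes "t' \<in> Tr ar UNIV"
  shows "tle ar Om sem t t' \<longleftrightarrow>
    (\<forall>m\<in>Om. \<forall>B. t \<in> omod ar sem m UNIV B \<longrightarrow> t' \<in> omod ar sem m UNIV B)"
proof (intro iffI ballI allI impI)
  fix m B
  assume tle: "tle ar Om sem t t'" and m: "m \<in> Om" and t: "t \<in> omod ar sem m UNIV B"
  have "B = {} \<or> B = {()}"
    by (cases "() \<in> B") (simp_all add: set_eq_iff)
  then have "omod ar sem m UNIV B \<in> Tsem ar Om sem"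
    using m Tsem.T_top[of m Om ar sem] Tsem.T_bot[of m Om ar sem] by auto
  then show "t' \<in> omod ar sem m UNIV B"
    using tle t by (simp add: tle_def)
next
  assume gen: "\<forall>m\<in>Om. \<forall>B. t \<in> omod ar sem m UNIV B \<longrightarrow> t' \<in> omod ar sem m UNIV B"
  have "t \<in> \<Phi> \<longrightarrow> t' \<in> \<Phi>" if "\<Phi> \<in> Tsem ar Om sem" for \<Phi>
    using that by (induction rule: Tsem.induct) (use gen assms in blast)+
  then show "tle ar Om sem t t'" by (simp add: tle_def)
qed

definition tle_upset :: "('l \<Rightarrow> nat option) \<Rightarrow> 'm set \<Rightarrow> ('m \<Rightarrow> ('l, unit) etree set)
    \<Rightarrow> ('l, unit) etree set \<Rightarrow> ('l, unit) etree set" where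
  "tle_upset ar Om sem B = {t' \<in> Tr ar UNIV. \<exists>t \<in> B \<inter> Tr ar UNIV. tle ar Om sem t t'}"

lemma tle_upset_in_Tsem: "tle_upset ar Om sem B \<in> Tsem ar Om sem"
proof -
  define U where "U t = Tr ar UNIV \<inter> \<Inter>{\<Phi> \<in> Tsem ar Om sem. t \<in> \<Phi>}" for t
  have "U t \<in> Tsem ar Om sem" for t
    unfolding U_def by (rule Tsem.T_And) auto
  then have "\<Union>(U ` (B \<inter> Tr ar UNIV)) \<in> Tsem ar Om sem"
    by (intro Tsem.T_Or) auto
  moreover have "\<Union>(U ` (B \<inter> Tr ar UNIV)) = tle_upset ar Om sem B"
    by (auto simp: U_def tle_upset_def tle_def)
  ultimately show ?thesis by simp
qed

lemma subset_tle_upset: "B \<inter> Tr ar UNIV \<subseteq> tle_upset ar Om sem B"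
  by (auto simp: tle_upset_def tle_def)

lemma rel_O_imp_tle_restr:
  assumes "(s, s') \<in> rel_O ar Om sem X Y R" and "A \<subseteq> X"
  shows "tle ar Om sem (restr A s) (restr (R `` A) s')"
proof -
  from assms(1) have s: "s \<in> Tr ar X" and s': "s' \<in> Tr ar Y"
    and transfer: "\<And>A m. A \<subseteq> X \<Longrightarrow> m \<in> Om \<Longrightarrow> s \<in> omod ar sem m X A \<Longrightarrow>
      s' \<in> omod ar sem m Y (R `` A)"
    by (auto simp: rel_O_def)
  show ?thesis
    unfolding tle_iff_omod[OF restr_in_Tr[OF s']] omod_restr[OF s] omod_restr[OF s']
  proof (intro ballI allI impI)
    fix m B
    assume "m \<in> Om" and "s \<in> omod ar sem m X (if () \<in> B then A else {})"
    then have "s' \<in> omod ar sem m Y (R `` (if () \<in> B then A else {}))"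
      using transfer assms(2) by simp
    then show "s' \<in> omod ar sem m Y (if () \<in> B then R `` A else {})"
      by (cases "() \<in> B") simp_all
  qed
qed

lemma rle_map_restr:
  assumes up: "\<forall>m\<in>Om. upclosed ar (sem m)"
    and tr: "(t, r) \<in> rel_O ar Om sem (Tr ar X) (Tr ar Y) (rel_O ar Om sem X Y R)"
    and A: "A \<subseteq> X"
  shows "rle ar Om sem (map_etree id (restr A) t) (map_etree id (restr (R `` A)) r)"
  unfolding rle_def
proof (intro ballI impI)
  fix m \<Phi>
  assume m: "m \<in> Om" and \<Phi>: "\<Phi> \<in> Tsem ar Om sem"
    and "map_etree id (restr A) t \<in> omod ar sem m (Tr ar UNIV) \<Phi>"
  from tr have t: "t \<in> Tr ar (Tr ar X)" and r: "r \<in> Tr ar (Tr ar Y)"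
    and transfer: "\<And>B. B \<subseteq> Tr ar X \<Longrightarrow> t \<in> omod ar sem m (Tr ar X) B \<Longrightarrow>
      r \<in> omod ar sem m (Tr ar Y) (rel_O ar Om sem X Y R `` B)"
    using m by (auto simp: rel_O_def)
  note mono = omod_mono[where sem = sem and m = m, OF up[rule_format, OF m]]
  define B where "B = restr A -` \<Phi> \<inter> Tr ar X"
  have "t \<in> omod ar sem m (Tr ar X) (restr A -` \<Phi>)"
    using \<open>map_etree id (restr A) t \<in> _\<close> by (simp add: omod_map_etree[OF t restr_image_Tr])
  then have "t \<in> omod ar sem m (Tr ar X) B"
    by (rule mono) (auto simp: B_def)
  then have "r \<in> omod ar sem m (Tr ar Y) (rel_O ar Om sem X Y R `` B)"
    by (rule transfer[rotated]) (simp add: B_def)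
  moreover have "rel_O ar Om sem X Y R `` B \<inter> Tr ar Y \<subseteq> restr (R `` A) -` \<Phi>"
    using rel_O_imp_tle_restr[OF _ A, where sem = sem] \<Phi> by (fastforce simp: B_def tle_def)
  ultimately have "r \<in> omod ar sem m (Tr ar Y) (restr (R `` A) -` \<Phi>)"
    by (rule mono)
  then show "map_etree id (restr (R `` A)) r \<in> omod ar sem m (Tr ar UNIV) \<Phi>"
    by (simp add: omod_map_etree[OF r restr_image_Tr])
qed

lemma lift_prop_if_decomposable:
  assumes up: "\<forall>m\<in>Om. upclosed ar (sem m)" and dec: "decomposable ar Om sem"
  shows "lift_prop ar Om sem X Y"
  unfolding lift_prop_def
proof (intro allI impI)
  fix R t r
  assume tr: "(t, r) \<in> rel_O ar Om sem (Tr ar X) (Tr ar Y) (rel_O ar Om sem X Y R)"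
  then have t: "t \<in> Tr ar (Tr ar X)" and r: "r \<in> Tr ar (Tr ar Y)"
    by (auto simp: rel_O_def)
  have jt: "join t \<in> Tr ar X" and jr: "join r \<in> Tr ar Y"
    using t r by (simp_all add: join_in_Tr)
  have "join r \<in> omod ar sem m Y (R `` A)"
    if A: "A \<subseteq> X" and m: "m \<in> Om" and jtA: "join t \<in> omod ar sem m X A" for A m
  proof -
    have "tle ar Om sem (join (map_etree id (restr A) t)) (join (map_etree id (restr (R `` A)) r))"
      using dec rle_map_restr[OF up tr A] map_etree_in_Tr[OF t restr_image_Tr]
        map_etree_in_Tr[OF r restr_image_Tr]
      unfolding decomposable_def by blast
    then have "tle ar Om sem (restr A (join t)) (restr (R `` A) (join r))"
      by (simp only: restr_join)
    moreover have "restr A (join t) \<in> omod ar sem m UNIV {()}"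
      using jtA by (simp add: omod_restr[OF jt])
    ultimately have "restr (R `` A) (join r) \<in> omod ar sem m UNIV {()}"
      using iffD1[OF tle_iff_omod[OF restr_in_Tr[OF jr]]] m by blast
    then show ?thesis
      by (simp add: omod_restr[OF jr])
  qed
  then show "(join t, join r) \<in> rel_O ar Om sem X Y R"
    using jt jr by (auto simp: rel_O_def)
qed

lemma rel_O_map_const_iff_tle:
  assumes t: "t \<in> Tr ar UNIV" and t': "t' \<in> Tr ar UNIV"
  shows "(map_etree id (\<lambda>_. c) t, map_etree id (\<lambda>_. c) t') \<in> rel_O ar Om sem {c} {c} {(c, c)}
    \<longleftrightarrow> tle ar Om sem t t'"
proof -
  have const: "(\<lambda>_::unit. c) ` UNIV \<subseteq> {c}" by auto
  have subsets: "(\<forall>A\<subseteq>{c}. Q ((\<lambda>_::unit. c) -` A)) \<longleftrightarrow> (\<forall>B. Q B)" for Q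
  proof
    assume "\<forall>A\<subseteq>{c}. Q ((\<lambda>_::unit. c) -` A)"
    then have "Q ((\<lambda>_::unit. c) -` (if () \<in> B then {c} else {}))" for B by simp
    moreover have "(\<lambda>_::unit. c) -` (if () \<in> B then {c} else {}) = B" for B
      by (cases "() \<in> B") (simp_all add: set_eq_iff)
    ultimately show "\<forall>B. Q B" by simp
  qed simp
  have "(map_etree id (\<lambda>_. c) t, map_etree id (\<lambda>_. c) t') \<in> rel_O ar Om sem {c} {c} {(c, c)}
    \<longleftrightarrow> (\<forall>A\<subseteq>{c}. \<forall>m\<in>Om. t \<in> omod ar sem m UNIV ((\<lambda>_. c) -` A) \<longrightarrow>
        t' \<in> omod ar sem m UNIV ((\<lambda>_. c) -` A))"
    using map_etree_in_Tr[OF t const] map_etree_in_Tr[OF t' const]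
    by (auto simp: rel_O_def omod_map_etree[OF t const] omod_map_etree[OF t' const]
        Image_def subset_singleton_iff)
  also have "\<dots> \<longleftrightarrow> (\<forall>B. \<forall>m\<in>Om. t \<in> omod ar sem m UNIV B \<longrightarrow> t' \<in> omod ar sem m UNIV B)"
    by (rule subsets)
  also have "\<dots> \<longleftrightarrow> tle ar Om sem t t'"
    unfolding tle_iff_omod[OF t'] by blast
  finally show ?thesis .
qed

lemma rel_O_map_const_if_rle:
  assumes up: "\<forall>m\<in>Om. upclosed ar (sem m)"
    and r: "r \<in> Tr ar (Tr ar UNIV)" and r': "r' \<in> Tr ar (Tr ar UNIV)"
    and rle: "rle ar Om sem r r'"
  shows "(map_etree id (map_etree id (\<lambda>_. c)) r, map_etree id (map_etree id (\<lambda>_. c)) r')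
    \<in> rel_O ar Om sem (Tr ar {c}) (Tr ar {c}) (rel_O ar Om sem {c} {c} {(c, c)})"
proof -
  let ?emb = "map_etree id (\<lambda>_::unit. c)"
  let ?OR = "rel_O ar Om sem {c} {c} {(c, c)}"
  have emb_Tr: "?emb ` Tr ar UNIV \<subseteq> Tr ar {c}"
    using map_etree_in_Tr[where f = "\<lambda>_. c"] by blast
  have "map_etree id ?emb r' \<in> omod ar sem m (Tr ar {c}) (?OR `` B)"
    if m: "m \<in> Om" and "map_etree id ?emb r \<in> omod ar sem m (Tr ar {c}) B" for m B
  proof -
    note mono = omod_mono[where sem = sem and m = m, OF up[rule_format, OF m]]
    define \<Phi> where "\<Phi> = tle_upset ar Om sem (?emb -` B)"
    have "r \<in> omod ar sem m (Tr ar UNIV) (?emb -` B)"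
      using that(2) by (simp add: omod_map_etree[OF r emb_Tr])
    then have "r \<in> omod ar sem m (Tr ar UNIV) \<Phi>"
      by (rule mono) (simp add: \<Phi>_def subset_tle_upset)
    then have "r' \<in> omod ar sem m (Tr ar UNIV) \<Phi>"
      using rle m tle_upset_in_Tsem[of ar Om sem] unfolding rle_def \<Phi>_def by blast
    moreover have "\<Phi> \<inter> Tr ar UNIV \<subseteq> ?emb -` (?OR `` B)"
      using rel_O_map_const_iff_tle[where sem = sem and c = c] by (fastforce simp: \<Phi>_def tle_upset_def)
    ultimately have "r' \<in> omod ar sem m (Tr ar UNIV) (?emb -` (?OR `` B))"
      by (rule mono)
    then show ?thesis
      by (simp add: omod_map_etree[OF r' emb_Tr])
  qed
  then show ?thesis
    using map_etree_in_Tr[OF r emb_Tr] map_etree_in_Tr[OF r' emb_Tr]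
    by (auto simp: rel_O_def)
qed

lemma decomposable_if_lift_prop:
  assumes up: "\<forall>m\<in>Om. upclosed ar (sem m)" and lift: "lift_prop ar Om sem {c} {c}"
  shows "decomposable ar Om sem"
  unfolding decomposable_def
proof (intro ballI impI)
  fix r r'
  assume r: "r \<in> Tr ar (Tr ar UNIV)" and r': "r' \<in> Tr ar (Tr ar UNIV)"
    and "rle ar Om sem r r'"
  let ?emb = "map_etree id (\<lambda>_::unit. c)"
  have "{(c, c)} \<subseteq> {c} \<times> {c}"
    by simp
  from lift[unfolded lift_prop_def, rule_format, OF this
      rel_O_map_const_if_rle[OF up r r' \<open>rle ar Om sem r r'\<close>]]
  have "(join (map_etree id ?emb r), join (map_etree id ?emb r')) \<in> rel_O ar Om sem {c} {c} {(c, c)}" .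
  then have "(?emb (join r), ?emb (join r')) \<in> rel_O ar Om sem {c} {c} {(c, c)}"
    by (simp only: join_map_etree)
  then show "tle ar Om sem (join r) (join r')"
    by (rule iffD1[OF rel_O_map_const_iff_tle[OF join_in_Tr[OF r] join_in_Tr[OF r']]])
qed

theorem corollary5p10:
  fixes ar :: "'l \<Rightarrow> nat option" and Om :: "'m set"
    and sem :: "'m \<Rightarrow> ('l, unit) etree set"
  assumes sem_T1: "\<forall>m\<in>Om. sem m \<subseteq> Tr ar UNIV"
    and up: "\<forall>m\<in>Om. upclosed ar (sem m)"
  shows "(decomposable ar Om sem \<longrightarrow> (\<forall>(X::'x set) (Y::'y set). lift_prop ar Om sem X Y))
       \<and> ((\<forall>(X::('l, unit) etree set) (Y::('l, unit) etree set). lift_prop ar Om sem X Y)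
            \<longrightarrow> decomposable ar Om sem)"
  using lift_prop_if_decomposable[OF up]
    decomposable_if_lift_prop[OF up, where c = "Bot :: ('l, unit) etree"]
  by blast

end
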